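(* Let $F:\mathcal{H}\to\mathbb{R}$ be differentiable with $L$-Lipschitz gradient, $\arg\min F\ne\emptyset$, satisfying (PL) with $\mu>0$, and assume $\mu\le L$. Let $\delta>0$ and $$\alpha_\pm=\frac12\Big(\delta+\frac{3L}{\delta}\pm\sqrt{\Big(\delta+\frac L\delta\Big)^2-4\mu}\Big).$$ Let $\alpha\in\big(\frac L\delta,\alpha_-\big]\cup\big[\alpha_+,\delta+\frac{2L}\delta\big)$ with $\alpha\ne\frac13\big(\delta+\frac{4L}{\delta}\big)$, and let $x(\cdot)$ be the solution of the heavy ball system with damping $\alpha$ and initial point $x_0$. Then for all $t\ge0$, $$F(x(t))-F_*\le (F(x_0)-F_* )\Big(1+\frac{\delta+\frac{2L}{\delta}-\alpha}{\big|\delta+\frac{4L}\delta-3\alpha\big|}\Big)e^{-mt},\qquad m=\min\Big\{\delta+\frac{2L}\delta-\alpha,\ 2\Big(\alpha-\frac L\delta\Big)\Big\}.$$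
   Context: (PL) with constant $\mu>0$: $F(x)-F_*\le \frac{1}{2\mu}\|\nabla F(x)\|^2$ for all $x$, where $F_*=\min F$. Heavy ball system: $\ddot x(t)+\alpha\dot x(t)+\nabla F(x(t))=0$, $x(0)=x_0$, $\dot x(0)=0$ (unique $C^2$ global solution). *)

theory Defs
  imports "HOL-Analysis.Analysis"
begin

definition Fstar :: "('a \<Rightarrow> real) \<Rightarrow> real" where
  "Fstar F = (INF y. F y)"

definition heavy_ball_solution ::
  "('a::real_normed_vector \<Rightarrow> 'a) \<Rightarrow> real \<Rightarrow> 'a \<Rightarrow> (real \<Rightarrow> 'a) \<Rightarrow> bool" where
  "heavy_ball_solution gradF alpha x0 x \<longleftrightarrow>
     (\<exists>v a. x 0 = x0 \<and> v 0 = 0 \<and>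
        (\<forall>t\<ge>0. (x has_vector_derivative v t) (at t within {0..})) \<and>
        (\<forall>t\<ge>0. (v has_vector_derivative a t) (at t within {0..})) \<and>
        continuous_on {0..} a \<and>
        (\<forall>t\<ge>0. a t + alpha *\<^sub>R v t + gradF (x t) = 0))"

end

theory Submission
  imports Defs
begin

text \<open>Put \<open>\<gamma> = \<alpha> - L/\<delta>\<close> and \<open>\<beta> = \<delta> + 2L/\<delta> - \<alpha>\<close>; the admissible range of \<open>\<alpha>\<close> is what makes
  \<open>\<gamma> \<beta> \<le> \<mu>\<close>. For \<open>\<phi> = F(x) - F\<^sub>*\<close>, the energy \<open>V = \<beta> \<phi> + \<langle>\<nabla>F(x), \<dot>x\<rangle> + \<delta>/2 |\<dot>x|\<^sup>2\<close>
  satisfies \<open>V' + 2\<gamma> V \<le> 2\<gamma>\<beta> \<phi> - |\<nabla>F(x)|\<^sup>2 \<le> 0\<close> by (PL). Since \<open>\<nabla>F\<close> is only Lipschitz,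
  the derivative of \<open>\<nabla>F(x)\<close> is replaced by the bound \<open>L |\<dot>x|\<close>, and the inequality holds for the
  upper right Dini derivative; this still gives \<open>exp (2\<gamma>t) V(t) \<le> V(0) = \<beta> \<phi>(0)\<close>.
  Finally \<open>\<beta> \<phi> + \<phi>' \<le> V\<close>, so \<open>(exp (\<beta>t) \<phi>)' \<le> \<beta> \<phi>(0) exp ((\<beta> - 2\<gamma>) t)\<close>, and integrating
  yields the estimate with the two rates \<open>\<beta>\<close> and \<open>2\<gamma>\<close>.\<close>

lemma has_vector_derivative_imp_right_quotient_tendsto:
  fixes f :: "real \<Rightarrow> 'b::real_normed_vector"
  assumes "(f has_vector_derivative f') (at t within S)" and "{t<..} \<subseteq> S"
  shows "((\<lambda>h. (1/h) *\<^sub>R (f (t+h) - f t)) \<longlongrightarrow> f') (at_right 0)"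
proof -
  have "(f has_vector_derivative f') (at_right t)"
    using assms by (rule has_vector_derivative_within_subset)
  then have "((\<lambda>y. (1 / norm (y - t)) *\<^sub>R (f y - (f t + (y - t) *\<^sub>R f'))) \<longlongrightarrow> 0) (at_right t)"
    unfolding has_vector_derivative_def has_derivative_within by simp
  then have "((\<lambda>y. (1 / norm (y - t)) *\<^sub>R (f y - (f t + (y - t) *\<^sub>R f')) + f') \<longlongrightarrow> 0 + f')
      (at_right t)"
    by (rule tendsto_add) (rule tendsto_const)
  moreover have "\<forall>\<^sub>F y in at_right t.
      (1 / norm (y - t)) *\<^sub>R (f y - (f t + (y - t) *\<^sub>R f')) + f' = (1 / (y - t)) *\<^sub>R (f y - f t)"
    by (rule eventually_at_rightI[of t "t+1"]) (auto simp: scaleR_diff_right scaleR_add_right)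
  ultimately have "((\<lambda>y. (1 / (y - t)) *\<^sub>R (f y - f t)) \<longlongrightarrow> f') (at_right t)"
    by (simp add: tendsto_cong)
  then show ?thesis
    unfolding filterlim_at_right_to_0[of _ _ t] by (simp add: add.commute)
qed

lemma right_dini_nonpos_imp_decreasing:
  fixes f :: "real \<Rightarrow> real"
  assumes "a \<le> b" and cont: "continuous_on {a..b} f"
    and dini: "\<And>t \<epsilon>. a \<le> t \<Longrightarrow> t < b \<Longrightarrow> \<epsilon> > 0 \<Longrightarrow> \<forall>\<^sub>F h in at_right 0. f (t+h) \<le> f t + \<epsilon> * h"
  shows "f b \<le> f a"
proof (rule field_le_epsilon)
  fix e :: real assume "0 < e"
  define \<epsilon> where "\<epsilon> = e / (b - a + 1)"
  have "\<epsilon> > 0" using \<open>0 < e\<close> \<open>a \<le> b\<close> by (simp add: \<epsilon>_def)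
  define S where "S = {u \<in> {a..b}. f u \<le> f a + \<epsilon> * (u - a)}"
  have "closed S" unfolding S_def
    by (intro continuous_on_closed_Collect_le closed_atLeastAtMost cont continuous_intros)
  moreover have "a \<in> S" "bdd_above S" using \<open>a \<le> b\<close> by (auto simp: S_def intro: bdd_aboveI[of _ b])
  ultimately have "Sup S \<in> S" using closed_contains_Sup by blast
  have "Sup S = b"
  proof (rule ccontr)
    let ?c = "Sup S"
    assume "?c \<noteq> b"
    with \<open>?c \<in> S\<close> have c: "a \<le> ?c" "?c < b" "f ?c \<le> f a + \<epsilon> * (?c - a)" by (auto simp: S_def)
    obtain d where "d > 0" and d: "\<And>h. 0 < h \<Longrightarrow> h < d \<Longrightarrow> f (?c+h) \<le> f ?c + \<epsilon> * h"
      using dini[OF c(1,2) \<open>\<epsilon> > 0\<close>] unfolding eventually_at_right_field by auto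
    define h where "h = min (d/2) (b - ?c)"
    have h: "0 < h" "h < d" "?c + h \<le> b" using \<open>d > 0\<close> c by (auto simp: h_def)
    have "f (?c+h) \<le> f a + \<epsilon> * (?c + h - a)" using d[OF h(1,2)] c(3) by (simp add: algebra_simps)
    with h c have "?c + h \<in> S" by (simp add: S_def)
    then have "?c + h \<le> ?c" using \<open>bdd_above S\<close> by (rule cSup_upper)
    with h show False by simp
  qed
  with \<open>Sup S \<in> S\<close> have "f b \<le> f a + \<epsilon> * (b - a)" by (simp add: S_def)
  also have "\<epsilon> * (b - a) \<le> e" using \<open>0 < e\<close> \<open>a \<le> b\<close> by (simp add: \<epsilon>_def field_simps)
  finally show "f b \<le> f a + e" by simp
qed

lemma right_dini_nonpos_of_tendsto:
  fixes f B :: "real \<Rightarrow> real"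
  assumes "\<forall>\<^sub>F h in at_right 0. f (t+h) - f t \<le> h * B h"
    and "(B \<longlongrightarrow> D) (at_right 0)" and "D \<le> 0" and "\<epsilon> > 0"
  shows "\<forall>\<^sub>F h in at_right 0. f (t+h) \<le> f t + \<epsilon> * h"
proof -
  have "\<forall>\<^sub>F h in at_right 0. B h < \<epsilon>"
    using order_tendstoD(2)[OF assms(2)] assms(3,4) by simp
  moreover have "\<forall>\<^sub>F h in at_right (0::real). h > 0"
    by (simp add: eventually_at_right_less)
  ultimately show ?thesis using assms(1)
  proof eventually_elim
    case (elim h)
    then have "h * B h \<le> \<epsilon> * h" by (metis less_imp_le mult.commute mult_right_mono)
    with elim show ?case by linarith
  qed
qed

lemma increment_le_of_DERIV_le_exp:
  fixes g g' :: "real \<Rightarrow> real"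
  assumes deriv: "\<And>u. 0 \<le> u \<Longrightarrow> (g has_real_derivative g' u) (at u within {0..})"
    and le: "\<And>u. 0 \<le> u \<Longrightarrow> g' u \<le> C * exp (k * u)"
    and "k \<noteq> 0" and "0 \<le> t"
  shows "g t - g 0 \<le> C * (exp (k * t) - 1) / k"
proof -
  define \<psi> where "\<psi> u = g u - C * (exp (k * u) - 1) / k" for u
  have d\<psi>: "(\<psi> has_real_derivative g' u - C * exp (k * u)) (at u within {0..})" if "0 \<le> u" for u
    unfolding \<psi>_def using deriv[OF that] \<open>k \<noteq> 0\<close>
    by (auto intro!: derivative_eq_intros)
  have "\<psi> t \<le> \<psi> 0"
  proof (rule DERIV_nonpos_imp_decreasing_open[OF \<open>0 \<le> t\<close>])
    fix u assume "0 < u" "u < t"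
    then have "at u within {0..} = at u"
      by (intro at_within_open_subset[of _ "{0<..}"]) auto
    then show "\<exists>y. (\<psi> has_real_derivative y) (at u) \<and> y \<le> 0"
      using d\<psi>[of u] le[of u] \<open>0 < u\<close> by auto
  next
    show "continuous_on {0..t} \<psi>"
      by (rule continuous_on_subset[of "{0..}", OF continuous_on_vector_derivative])
        (use d\<psi> in \<open>auto simp: has_real_derivative_iff_has_vector_derivative\<close>)
  qed
  then show ?thesis by (simp add: \<psi>_def)
qed

lemma heavy_ball_damping_rates:
  fixes L \<mu> \<delta> \<alpha> :: real
  assumes "\<mu> \<le> L" and "\<delta> > 0"
    and range:
      "(L / \<delta> < \<alpha> \<and> \<alpha> \<le> (\<delta> + 3 * L / \<delta> - sqrt ((\<delta> + L / \<delta>)\<^sup>2 - 4 * \<mu>)) / 2)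
       \<or> ((\<delta> + 3 * L / \<delta> + sqrt ((\<delta> + L / \<delta>)\<^sup>2 - 4 * \<mu>)) / 2 \<le> \<alpha> \<and> \<alpha> < \<delta> + 2 * L / \<delta>)"
  shows "\<alpha> < \<delta> + 2 * L / \<delta>"
    and "(\<alpha> - L / \<delta>) * (\<delta> + 2 * L / \<delta> - \<alpha>) \<le> \<mu>"
proof -
  define l where "l = L / \<delta>"
  define s where "s = sqrt ((\<delta> + l)\<^sup>2 - 4 * \<mu>)"
  have "L = l * \<delta>" using \<open>\<delta> > 0\<close> by (simp add: l_def)
  \<comment> \<open>The discriminant is nonnegative because \<open>4 \<mu> \<le> 4 L = 4 l \<delta> \<le> (\<delta> + l)\<^sup>2\<close>.\<close>
  have "(\<delta> + l)\<^sup>2 - 4 * \<mu> \<ge> (\<delta> - l)\<^sup>2"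
    using \<open>\<mu> \<le> L\<close> \<open>L = l * \<delta>\<close> by (simp add: power2_eq_square algebra_simps)
  then have "(\<delta> + l)\<^sup>2 - 4 * \<mu> \<ge> 0"
    by (rule order_trans[OF zero_le_power2])
  then have "s \<ge> 0" and s2: "s\<^sup>2 = (\<delta> + l)\<^sup>2 - 4 * \<mu>"
    by (simp_all add: s_def)
  have range': "(l < \<alpha> \<and> \<alpha> \<le> (\<delta> + 3 * l - s) / 2) \<or> ((\<delta> + 3 * l + s) / 2 \<le> \<alpha> \<and> \<alpha> < \<delta> + 2 * l)"
    using range by (simp add: l_def s_def)
  then show "\<alpha> < \<delta> + 2 * L / \<delta>"
    using \<open>s \<ge> 0\<close> by (auto simp: l_def)
  have "s\<^sup>2 \<le> (2 * \<alpha> - \<delta> - 3 * l)\<^sup>2"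
    using range' \<open>s \<ge> 0\<close> by (intro abs_le_square_iff[THEN iffD1]) auto
  then have "(\<alpha> - l) * (\<delta> + 2 * l - \<alpha>) \<le> \<mu>"
    unfolding s2 by (simp add: power2_eq_square algebra_simps)
  then show "(\<alpha> - L / \<delta>) * (\<delta> + 2 * L / \<delta> - \<alpha>) \<le> \<mu>"
    by (simp add: l_def)
qed

lemma two_rate_exp_bound:
  fixes a b p p0 t :: real
  assumes "0 \<le> b" "0 \<le> p0" "0 \<le> t" "b \<noteq> 2 * a"
    and growth: "exp (b * t) * p - p0 \<le> b * p0 * (exp ((b - 2 * a) * t) - 1) / (b - 2 * a)"
  shows "p \<le> p0 * (1 + b / \<bar>b - 2 * a\<bar>) * exp (- min b (2 * a) * t)"
proof -
  define M where "M = exp (- min b (2 * a) * t)"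
  have e1: "exp (- b * t) \<le> M" and e2: "exp (- (2 * a) * t) \<le> M"
    using \<open>0 \<le> t\<close> by (auto simp: M_def intro: mult_right_mono)
  have "p = exp (- b * t) * (exp (b * t) * p)"
    by (simp add: exp_minus field_simps)
  also have "\<dots> \<le> exp (- b * t) * (p0 + b * p0 * (exp ((b - 2 * a) * t) - 1) / (b - 2 * a))"
    using growth by (intro mult_left_mono) auto
  also have "\<dots> = p0 * exp (- b * t) + b * p0 * ((exp (- (2 * a) * t) - exp (- b * t)) / (b - 2 * a))"
    by (simp add: field_simps flip: exp_add)
  also have "\<dots> \<le> p0 * M + b * p0 * (M / \<bar>b - 2 * a\<bar>)"
  proof (intro add_mono mult_left_mono)
    have "(exp (- (2 * a) * t) - exp (- b * t)) / (b - 2 * a)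
        \<le> \<bar>exp (- (2 * a) * t) - exp (- b * t)\<bar> / \<bar>b - 2 * a\<bar>"
      by (metis abs_divide abs_ge_self)
    also have "\<dots> \<le> M / \<bar>b - 2 * a\<bar>"
    proof (rule divide_right_mono)
      show "\<bar>exp (- (2 * a) * t) - exp (- b * t)\<bar> \<le> M"
        unfolding abs_le_iff using e1 e2 exp_gt_zero[of "- b * t"] exp_gt_zero[of "- (2 * a) * t"]
        by linarith
    qed simp
    finally show "(exp (- (2 * a) * t) - exp (- b * t)) / (b - 2 * a) \<le> M / \<bar>b - 2 * a\<bar>" .
  qed (use e1 \<open>0 \<le> b\<close> \<open>0 \<le> p0\<close> in auto)
  also have "\<dots> = p0 * (1 + b / \<bar>b - 2 * a\<bar>) * M"
    by (simp add: algebra_simps)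
  finally show ?thesis unfolding M_def .
qed

locale heavy_ball_PL =
  fixes F :: "'a::real_inner \<Rightarrow> real" and gradF :: "'a \<Rightarrow> 'a"
    and L \<mu> \<alpha> \<delta> :: real and x v :: "real \<Rightarrow> 'a"
  assumes F_has_derivative: "\<And>y. (F has_derivative (\<lambda>h. gradF y \<bullet> h)) (at y)"
    and gradF_lipschitz: "\<And>y z. norm (gradF y - gradF z) \<le> L * norm (y - z)"
    and Fstar_le: "\<And>y. Fstar F \<le> F y"
    and PL: "\<And>y. F y - Fstar F \<le> (1 / (2 * \<mu>)) * (norm (gradF y))\<^sup>2"
    and mu_pos: "\<mu> > 0"
    and delta_pos: "\<delta> > 0"
    and x_has_derivative: "\<And>t. 0 \<le> t \<Longrightarrow> (x has_vector_derivative v t) (at t within {0..})"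
    and v_has_derivative:
      "\<And>t. 0 \<le> t \<Longrightarrow> (v has_vector_derivative - (\<alpha> *\<^sub>R v t + gradF (x t))) (at t within {0..})"
begin

definition \<gamma> :: real where "\<gamma> = \<alpha> - L / \<delta>"

definition \<beta> :: real where "\<beta> = \<delta> + 2 * L / \<delta> - \<alpha>"

definition excess :: "real \<Rightarrow> real" where "excess t = F (x t) - Fstar F"

definition lyapunov :: "real \<Rightarrow> real" where
  "lyapunov t = \<beta> * excess t + gradF (x t) \<bullet> v t + \<delta> / 2 * (v t \<bullet> v t)"

lemma excess_nonneg: "0 \<le> excess t"
  using Fstar_le by (simp add: excess_def)

lemma excess_has_derivative:
  assumes "0 \<le> t"
  shows "(excess has_real_derivative gradF (x t) \<bullet> v t) (at t within {0..})"
proof -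
  have "(F has_derivative (\<lambda>h. gradF (x t) \<bullet> h)) (at (x t) within x ` {0..})"
    using F_has_derivative by (rule has_derivative_at_withinI)
  from diff_chain_within[OF x_has_derivative[OF assms, unfolded has_vector_derivative_def] this]
  have "((\<lambda>s. F (x s)) has_vector_derivative gradF (x t) \<bullet> v t) (at t within {0..})"
    by (simp add: has_vector_derivative_def o_def)
  then have "((\<lambda>s. F (x s)) has_real_derivative gradF (x t) \<bullet> v t) (at t within {0..})"
    by (simp add: has_real_derivative_iff_has_vector_derivative)
  then show ?thesis
    unfolding excess_def by (auto intro!: derivative_eq_intros)
qed

lemma continuous_on_x: "continuous_on {0..} x"
  using x_has_derivative by (intro continuous_on_vector_derivative) auto

lemma continuous_on_v: "continuous_on {0..} v"
  using v_has_derivative by (intro continuous_on_vector_derivative) auto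

lemma continuous_on_excess: "continuous_on {0..} excess"
  using excess_has_derivative
  by (intro continuous_on_vector_derivative) (auto simp: has_real_derivative_iff_has_vector_derivative)

lemma continuous_on_gradF_x: "continuous_on {0..} (\<lambda>t. gradF (x t))"
proof -
  have "norm (gradF y - gradF z) \<le> max L 0 * norm (y - z)" for y z
    using gradF_lipschitz[of y z] by (smt (verit) mult_right_mono norm_ge_zero)
  then have "(max L 0)-lipschitz_on UNIV gradF"
    by (intro lipschitz_onI) (auto simp: dist_norm)
  then have "continuous_on UNIV gradF"
    by (rule lipschitz_on_continuous_on)
  then show ?thesis
    using continuous_on_x by (rule continuous_on_compose2) auto
qed

lemma continuous_on_lyapunov: "continuous_on {0..} lyapunov"
  unfolding lyapunov_def
  by (intro continuous_intros continuous_on_excess continuous_on_gradF_x continuous_on_v)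

text \<open>\<open>gradF \<circ> x\<close> is merely Lipschitz, so the gradient is frozen at its value at time \<open>t\<close>.\<close>
lemma frozen_lyapunov_has_derivative:
  assumes "0 \<le> t"
  shows "((\<lambda>s. exp (2 * \<gamma> * s) * (\<beta> * excess s + gradF (x t) \<bullet> v s + \<delta> / 2 * (v s \<bullet> v s)))
      has_real_derivative
        exp (2 * \<gamma> * t) * (2 * \<gamma> * \<beta> * excess t - (norm (gradF (x t)))\<^sup>2 - L * (norm (v t))\<^sup>2))
      (at t within {0..})"
proof -
  let ?g = "gradF (x t)" and ?a = "- (\<alpha> *\<^sub>R v t + gradF (x t))"
  have d_inner: "((\<lambda>s. ?g \<bullet> v s) has_real_derivative ?g \<bullet> ?a) (at t within {0..})"
    unfolding has_real_derivative_iff_has_vector_derivative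
    by (rule bounded_linear.has_vector_derivative[OF bounded_linear_inner_right v_has_derivative[OF assms]])
  have d_square: "((\<lambda>s. v s \<bullet> v s) has_real_derivative v t \<bullet> ?a + ?a \<bullet> v t) (at t within {0..})"
    unfolding has_real_derivative_iff_has_vector_derivative
    by (rule bounded_bilinear.has_vector_derivative[OF bounded_bilinear_inner
          v_has_derivative[OF assms] v_has_derivative[OF assms]])
  have deriv: "((\<lambda>s. exp (2 * \<gamma> * s) * (\<beta> * excess s + ?g \<bullet> v s + \<delta> / 2 * (v s \<bullet> v s)))
      has_real_derivative exp (2 * \<gamma> * t) * (2 * \<gamma> * (\<beta> * excess t + ?g \<bullet> v t + \<delta> / 2 * (v t \<bullet> v t))
        + (\<beta> * (?g \<bullet> v t) + ?g \<bullet> ?a + \<delta> / 2 * (v t \<bullet> ?a + ?a \<bullet> v t))))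
      (at t within {0..})"
    by (rule derivative_eq_intros d_inner d_square excess_has_derivative[OF assms] refl
        | simp add: algebra_simps)+
  have inner_a: "?g \<bullet> ?a = - \<alpha> * (?g \<bullet> v t) - (norm ?g)\<^sup>2"
    "v t \<bullet> ?a = - \<alpha> * (norm (v t))\<^sup>2 - ?g \<bullet> v t"
    "?a \<bullet> v t = - \<alpha> * (norm (v t))\<^sup>2 - ?g \<bullet> v t"
    by (simp_all add: power2_norm_eq_inner inner_diff_right inner_commute)
  have "2 * \<gamma> * (\<beta> * excess t + ?g \<bullet> v t + \<delta> / 2 * (v t \<bullet> v t))
      + (\<beta> * (?g \<bullet> v t) + ?g \<bullet> ?a + \<delta> / 2 * (v t \<bullet> ?a + ?a \<bullet> v t))
      = 2 * \<gamma> * \<beta> * excess t + (2 * \<gamma> + \<beta> - \<alpha> - \<delta>) * (?g \<bullet> v t)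
        + (\<delta> * \<gamma> - \<delta> * \<alpha>) * (norm (v t))\<^sup>2 - (norm ?g)\<^sup>2"
    unfolding inner_a by (simp add: power2_norm_eq_inner algebra_simps)
  also have "\<dots> = 2 * \<gamma> * \<beta> * excess t - (norm ?g)\<^sup>2 - L * (norm (v t))\<^sup>2"
    using delta_pos by (simp add: \<gamma>_def \<beta>_def field_simps)
  finally have rate: "2 * \<gamma> * (\<beta> * excess t + ?g \<bullet> v t + \<delta> / 2 * (v t \<bullet> v t))
      + (\<beta> * (?g \<bullet> v t) + ?g \<bullet> ?a + \<delta> / 2 * (v t \<bullet> ?a + ?a \<bullet> v t))
      = 2 * \<gamma> * \<beta> * excess t - (norm ?g)\<^sup>2 - L * (norm (v t))\<^sup>2" .
  show ?thesis
    using deriv unfolding rate .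
qed

lemma gradient_dominates_excess:
  assumes "\<gamma> * \<beta> \<le> \<mu>"
  shows "2 * \<gamma> * \<beta> * excess t \<le> (norm (gradF (x t)))\<^sup>2"
proof -
  have "\<gamma> * \<beta> * excess t \<le> \<mu> * excess t"
    using assms excess_nonneg by (rule mult_right_mono)
  also have "2 * (\<mu> * excess t) \<le> (norm (gradF (x t)))\<^sup>2"
    using PL[of "x t"] mu_pos by (simp add: excess_def field_simps)
  finally show ?thesis by simp
qed

lemma lyapunov_right_dini:
  assumes "\<gamma> * \<beta> \<le> \<mu>" and "0 \<le> t" and "\<epsilon> > 0"
  shows "\<forall>\<^sub>F h in at_right 0.
    exp (2 * \<gamma> * (t + h)) * lyapunov (t + h) \<le> exp (2 * \<gamma> * t) * lyapunov t + \<epsilon> * h"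
proof -
  let ?g = "gradF (x t)"
  define f where "f s = exp (2 * \<gamma> * s) * lyapunov s" for s
  define \<rho> where "\<rho> = (\<lambda>s. exp (2 * \<gamma> * s) * (\<beta> * excess s + ?g \<bullet> v s + \<delta> / 2 * (v s \<bullet> v s)))"
  define \<rho>' where "\<rho>' = exp (2 * \<gamma> * t) * (2 * \<gamma> * \<beta> * excess t - (norm ?g)\<^sup>2 - L * (norm (v t))\<^sup>2)"
  \<comment> \<open>By the Lipschitz bound, unfreezing the gradient costs at most \<open>L |\<dot>x| |v|\<close>, which cancels
    the term \<open>- L |v|\<^sup>2\<close> of the frozen derivative in the limit.\<close>
  define B where "B h = (1 / h) *\<^sub>R (\<rho> (t + h) - \<rho> t)
    + exp (2 * \<gamma> * (t + h)) * L * (norm ((1 / h) *\<^sub>R (x (t + h) - x t)) * norm (v (t + h)))" for h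
  have "{t<..} \<subseteq> {0..}" using \<open>0 \<le> t\<close> by auto
  have "(\<rho> has_vector_derivative \<rho>') (at t within {0..})"
    unfolding \<rho>_def \<rho>'_def has_real_derivative_iff_has_vector_derivative[symmetric]
    by (rule frozen_lyapunov_has_derivative[OF \<open>0 \<le> t\<close>])
  then have "((\<lambda>h. (1 / h) *\<^sub>R (\<rho> (t + h) - \<rho> t)) \<longlongrightarrow> \<rho>') (at_right 0)"
    using \<open>{t<..} \<subseteq> {0..}\<close> by (rule has_vector_derivative_imp_right_quotient_tendsto)
  moreover have "((\<lambda>h. (1 / h) *\<^sub>R (x (t + h) - x t)) \<longlongrightarrow> v t) (at_right 0)"
    using x_has_derivative[OF \<open>0 \<le> t\<close>] \<open>{t<..} \<subseteq> {0..}\<close>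
    by (rule has_vector_derivative_imp_right_quotient_tendsto)
  moreover have "((\<lambda>h. v (t + h)) \<longlongrightarrow> v t) (at_right 0)"
  proof -
    have "(v \<longlongrightarrow> v t) (at t within {0..})"
      using continuous_on_v \<open>0 \<le> t\<close> by (simp add: continuous_on_def)
    then have "(v \<longlongrightarrow> v t) (at_right t)"
      using \<open>{t<..} \<subseteq> {0..}\<close> by (rule tendsto_within_subset)
    then show ?thesis
      unfolding filterlim_at_right_to_0[of _ _ t] by (simp add: add.commute)
  qed
  ultimately have "(B \<longlongrightarrow> \<rho>' + exp (2 * \<gamma> * (t + 0)) * L * (norm (v t) * norm (v t))) (at_right 0)"
    unfolding B_def by (intro tendsto_intros)
  moreover have "\<rho>' + exp (2 * \<gamma> * (t + 0)) * L * (norm (v t) * norm (v t)) \<le> 0"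
    using gradient_dominates_excess[OF assms(1), of t]
    by (simp add: \<rho>'_def power2_eq_square algebra_simps mult_le_0_iff)
  moreover have "\<forall>\<^sub>F h in at_right 0. f (t + h) - f t \<le> h * B h"
  proof (rule eventually_at_rightI[of 0 1])
    fix h :: real assume "h \<in> {0<..<1}"
    then have "h > 0" by simp
    let ?dx = "x (t + h) - x t" and ?E = "exp (2 * \<gamma> * (t + h))"
    have "(gradF (x (t + h)) - ?g) \<bullet> v (t + h) \<le> L * norm ?dx * norm (v (t + h))"
      using norm_cauchy_schwarz gradF_lipschitz mult_right_mono norm_ge_zero order_trans by metis
    then have "?E * ((gradF (x (t + h)) - ?g) \<bullet> v (t + h)) \<le> ?E * (L * norm ?dx * norm (v (t + h)))"
      by (rule mult_left_mono) simp
    moreover have "f (t + h) = \<rho> (t + h) + ?E * ((gradF (x (t + h)) - ?g) \<bullet> v (t + h))"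
      by (simp add: f_def \<rho>_def lyapunov_def inner_diff_left algebra_simps)
    moreover have "f t = \<rho> t"
      by (simp add: f_def \<rho>_def lyapunov_def)
    moreover have "h * B h = \<rho> (t + h) - \<rho> t + ?E * (L * norm ?dx * norm (v (t + h)))"
      using \<open>h > 0\<close> unfolding B_def norm_scaleR by (simp add: algebra_simps)
    ultimately show "f (t + h) - f t \<le> h * B h" by linarith
  qed simp
  ultimately have "\<forall>\<^sub>F h in at_right 0. f (t + h) \<le> f t + \<epsilon> * h"
    using \<open>\<epsilon> > 0\<close> by (intro right_dini_nonpos_of_tendsto)
  then show ?thesis by (simp add: f_def)
qed

lemma lyapunov_decay:
  assumes "\<gamma> * \<beta> \<le> \<mu>" and "0 \<le> t"
  shows "exp (2 * \<gamma> * t) * lyapunov t \<le> lyapunov 0"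
proof -
  have "continuous_on {0..t} (\<lambda>s. exp (2 * \<gamma> * s) * lyapunov s)"
    by (intro continuous_intros continuous_on_subset[OF continuous_on_lyapunov]) auto
  then have "exp (2 * \<gamma> * t) * lyapunov t \<le> exp (2 * \<gamma> * 0) * lyapunov 0"
    using lyapunov_right_dini[OF assms(1)]
    by (intro right_dini_nonpos_imp_decreasing[OF \<open>0 \<le> t\<close>, where f = "\<lambda>s. exp (2 * \<gamma> * s) * lyapunov s"])
      auto
  then show ?thesis by simp
qed

lemma excess_growth_bound:
  assumes "\<gamma> * \<beta> \<le> \<mu>" and "\<beta> \<noteq> 2 * \<gamma>" and "0 \<le> t"
  shows "exp (\<beta> * t) * excess t - excess 0
    \<le> lyapunov 0 * (exp ((\<beta> - 2 * \<gamma>) * t) - 1) / (\<beta> - 2 * \<gamma>)"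
proof -
  have "exp (\<beta> * t) * excess t - exp (\<beta> * 0) * excess 0
    \<le> lyapunov 0 * (exp ((\<beta> - 2 * \<gamma>) * t) - 1) / (\<beta> - 2 * \<gamma>)"
  proof (rule increment_le_of_DERIV_le_exp[where g = "\<lambda>u. exp (\<beta> * u) * excess u"])
    fix u :: real assume "0 \<le> u"
    show "((\<lambda>u. exp (\<beta> * u) * excess u) has_real_derivative
        exp (\<beta> * u) * (\<beta> * excess u + gradF (x u) \<bullet> v u)) (at u within {0..})"
      using excess_has_derivative[OF \<open>0 \<le> u\<close>]
      by (auto intro!: derivative_eq_intros simp: algebra_simps)
    have "exp (\<beta> * u) * (\<beta> * excess u + gradF (x u) \<bullet> v u) \<le> exp (\<beta> * u) * lyapunov u"
      using delta_pos by (intro mult_left_mono) (auto simp: lyapunov_def)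
    also have "\<dots> = exp ((\<beta> - 2 * \<gamma>) * u) * (exp (2 * \<gamma> * u) * lyapunov u)"
      by (simp add: algebra_simps flip: exp_add)
    also have "\<dots> \<le> exp ((\<beta> - 2 * \<gamma>) * u) * lyapunov 0"
      using lyapunov_decay[OF assms(1) \<open>0 \<le> u\<close>] by (intro mult_left_mono) auto
    finally show "exp (\<beta> * u) * (\<beta> * excess u + gradF (x u) \<bullet> v u)
        \<le> lyapunov 0 * exp ((\<beta> - 2 * \<gamma>) * u)"
      by (simp add: mult.commute)
  qed (use assms in auto)
  then show ?thesis by simp
qed

end

theorem theorem6p1:
  fixes F :: "'a::{real_inner, complete_space} \<Rightarrow> real"
    and gradF :: "'a \<Rightarrow> 'a"
    and L \<mu> \<delta> \<alpha> :: real
    and x0 :: 'a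
    and x :: "real \<Rightarrow> 'a"
  assumes diff: "\<And>y. (F has_derivative (\<lambda>h. gradF y \<bullet> h)) (at y)"
    and lip: "\<And>y z. norm (gradF y - gradF z) \<le> L * norm (y - z)"
    and argmin: "\<exists>z. \<forall>y. F z \<le> F y"
    and mu_pos: "\<mu> > 0"
    and PL: "\<And>y. F y - Fstar F \<le> (1 / (2 * \<mu>)) * (norm (gradF y))\<^sup>2"
    and mu_le_L: "\<mu> \<le> L"
    and delta_pos: "\<delta> > 0"
    and alpha_range:
      "(L / \<delta> < \<alpha> \<and> \<alpha> \<le> (\<delta> + 3 * L / \<delta> - sqrt ((\<delta> + L / \<delta>)\<^sup>2 - 4 * \<mu>)) / 2)
       \<or> ((\<delta> + 3 * L / \<delta> + sqrt ((\<delta> + L / \<delta>)\<^sup>2 - 4 * \<mu>)) / 2 \<le> \<alpha> \<and> \<alpha> < \<delta> + 2 * L / \<delta>)"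
    and alpha_ne: "\<alpha> \<noteq> (\<delta> + 4 * L / \<delta>) / 3"
    and sol: "heavy_ball_solution gradF \<alpha> x0 x"
  shows "\<forall>t\<ge>0. F (x t) - Fstar F \<le>
           (F x0 - Fstar F)
           * (1 + (\<delta> + 2 * L / \<delta> - \<alpha>) / \<bar>\<delta> + 4 * L / \<delta> - 3 * \<alpha>\<bar>)
           * exp (- min (\<delta> + 2 * L / \<delta> - \<alpha>) (2 * (\<alpha> - L / \<delta>)) * t)"
proof -
  obtain v acc where "x 0 = x0" and "v 0 = 0"
    and x_deriv: "\<And>t. 0 \<le> t \<Longrightarrow> (x has_vector_derivative v t) (at t within {0..})"
    and v_deriv: "\<And>t. 0 \<le> t \<Longrightarrow> (v has_vector_derivative acc t) (at t within {0..})"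
    and ode: "\<And>t. 0 \<le> t \<Longrightarrow> acc t + \<alpha> *\<^sub>R v t + gradF (x t) = 0"
    using sol unfolding heavy_ball_solution_def by blast
  have "acc t = - (\<alpha> *\<^sub>R v t + gradF (x t))" if "0 \<le> t" for t
    using ode[OF that] by (metis add.assoc eq_neg_iff_add_eq_0)
  moreover obtain z where "\<And>y. F z \<le> F y"
    using argmin by blast
  then have "Fstar F = F z"
    unfolding Fstar_def by (intro cInf_eq_minimum) auto
  ultimately interpret heavy_ball_PL F gradF L \<mu> \<alpha> \<delta> x v
    using diff lip PL mu_pos delta_pos x_deriv v_deriv \<open>\<And>y. F z \<le> F y\<close>
    by unfold_locales auto
  have "0 \<le> \<beta>" and "\<gamma> * \<beta> \<le> \<mu>"
    using heavy_ball_damping_rates[OF mu_le_L delta_pos alpha_range] by (simp_all add: \<beta>_def \<gamma>_def)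
  have "\<beta> \<noteq> 2 * \<gamma>"
    using alpha_ne delta_pos by (auto simp: \<beta>_def \<gamma>_def field_simps)
  have "excess t \<le> excess 0 * (1 + \<beta> / \<bar>\<beta> - 2 * \<gamma>\<bar>) * exp (- min \<beta> (2 * \<gamma>) * t)" if "0 \<le> t" for t
    using excess_growth_bound[OF \<open>\<gamma> * \<beta> \<le> \<mu>\<close> \<open>\<beta> \<noteq> 2 * \<gamma>\<close> that] \<open>v 0 = 0\<close>
    by (intro two_rate_exp_bound[OF \<open>0 \<le> \<beta>\<close> excess_nonneg that \<open>\<beta> \<noteq> 2 * \<gamma>\<close>])
      (simp add: lyapunov_def)
  moreover have "\<beta> - 2 * \<gamma> = \<delta> + 4 * L / \<delta> - 3 * \<alpha>"
    by (simp add: \<beta>_def \<gamma>_def)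
  ultimately show ?thesis
    by (simp add: excess_def \<open>x 0 = x0\<close> \<beta>_def \<gamma>_def)
qed

end
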